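(* Let $n,r\ge1$, let $D=\{(\mathbf s_1,\mathbf t_1),\dots,(\mathbf s_r,\mathbf t_r)\}\subset\mathbb F_2^n\times\mathbb F_2^n$, fix $i\in\{1,\dots,n\}$, and let $f_i$, $p$, $I=\langle p\rangle$, $W_S$ and $$\Phi:\overline{\mathbb F}_2[\{c_S:S\subseteq[n]\}]\to\overline{\mathbb F}_2[\{b_H:H\subseteq[n]\}],\quad c_S\mapsto W_S,$$ be as follows: $f_i=\sum_{j=1}^r t_{j,i}\prod_{e=1}^n(1-(x_e-s_{j,e}))$, $p=\prod_{j=1}^r\bigl(1-\prod_{e=1}^n(1-(x_e-s_{j,e}))\bigr)$, and $W_S$ is the coefficient of $\prod_{l\in S}x_l$ in the reduction modulo $\langle x_e^2-x_e\rangle$ of $f_i+\bigl(\sum_{H\subseteq[n]}b_H\prod_{l\in H}x_l\bigr)p$. Let $\mathbb I(V^{ncf})=\bigcap_\sigma I_\sigma$ (intersection over all permutations $\sigma$ of $[n]$), where $$I_\sigma=\Bigl\langle c_{[n]}-1,\; c_S-c_{[r_S^\sigma]}\prod_{\sigma(k)\in[r_S^\sigma]\setminus S}c_{[n]\setminus\{\sigma(k)\}}\;:\;S\subsetneq[n]\Bigr\rangle\subseteq\overline{\mathbb F}_2[\{c_S:S\subseteq[n]\}].$$ Then the ideal of all nested canalyzing functions that fit the data set $D$ is $\mathbb I(V^{ncf})+\ker(\Phi)$; that is, the $\mathbb F_2$-rational points of $\mathbb V(\mathbb I(V^{ncf})+\ker\Phi)$, identified with Boolean polynomials via $(c_S)\leftrightarrow\sum_S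 c_S\prod_{l\in S}x_l$, are exactly the nested canalyzing functions $h$ on $n$ variables with $h(\mathbf s_j)=t_{j,i}$ for $j=1,\dots,r$.
   Context: Boolean functions $\mathbb F_2^n\to\mathbb F_2$ are identified with elements $\sum_{S\subseteq[n]}c_S\prod_{l\in S}x_l$ of $\mathbb F_2[x_1,\dots,x_n]/\langle x_e^2-x_e\rangle$ and with coefficient vectors $(c_S)\in\mathbb F_2^{2^n}$; $[n]=\{1,\dots,n\}$. A function "on $n$ variables" depends on each variable. A Boolean function $h$ on $n$ variables is nested canalyzing if there exist a permutation $\sigma$ of $[n]$ and $a_1,\dots,a_n,b_1,\dots,b_n\in\mathbb F_2$ such that $h(x)=b_k$ whenever $x_{\sigma(1)}\ne a_1,\dots,x_{\sigma(k-1)}\ne a_{k-1}$ and $x_{\sigma(k)}=a_k$ ($k=1,\dots,n$), and $h(x)=\overline{b_n}=1+b_n$ when $x_{\sigma(k)}\ne a_k$ for all $k$. For a permutation $\sigma$, the order $<_\sigma$ on $[n]$ is $\sigma(k)<_\sigma\sigma(l)\iff k<l$; for nonempty $S\subseteq[n]$, $r_S^\sigma$ denotes the index $m$ such that $\sigma(m)$ is the $<_\sigma$-largest element of $S$, and $[r_S^\sigma]=\{\sigma(1),\dots,\sigma(r_S^\sigma)\}$ (for $S=\emptyset$ the completion is empty). $V^{ncf}\subseteq\mathbb F_2^{2^n}$ denotes the set of coefficient vectors of all nested canalyzing functions, $V^{ncf}=\bigcup_\sigma V_\sigma^{ncf}$ with $V_\sigma^{ncf}$ the vectors with $c_{[n]}=1$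 and $c_S=c_{[r_S^\sigma]}\prod_{\sigma(k)\in[r_S^\sigma]\setminus S}c_{[n]\setminus\{\sigma(k)\}}$; its ideal is $\bigcap_\sigma I_\sigma$. $\overline{\mathbb F}_2$ is the algebraic closure of $\mathbb F_2$. *)

theory Defs
  imports "HOL-Library.Poly_Mapping" "HOL-Library.Z2"
    "HOL-Algebra.Algebraic_Closure_Type" "HOL-Combinatorics.Permutations"
begin

(* Multiplication is the convolution product provided by Poly_Mapping. *)
type_synonym ('v, 'k) mpoly = "('v \<Rightarrow>\<^sub>0 nat) \<Rightarrow>\<^sub>0 'k"

type_synonym F2bar = "bit alg_closure"

definition Var :: "'v \<Rightarrow> ('v, 'k::comm_ring_1) mpoly" where
  "Var v = Poly_Mapping.single (Poly_Mapping.single v 1) 1"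

definition Const :: "'k \<Rightarrow> ('v, 'k::zero) mpoly" where
  "Const a = Poly_Mapping.single 0 a"

definition mpoly_hom :: "('k::zero \<Rightarrow> 'r::comm_ring_1) \<Rightarrow> ('v \<Rightarrow> 'r) \<Rightarrow> ('v, 'k) mpoly \<Rightarrow> 'r" where
  "mpoly_hom phi a P = (\<Sum>m\<in>Poly_Mapping.keys P. phi (Poly_Mapping.lookup P m) * (\<Prod>v\<in>Poly_Mapping.keys (m::'v \<Rightarrow>\<^sub>0 nat). a v ^ Poly_Mapping.lookup m v))"

definition mpoly_eval :: "('v, 'k::comm_ring_1) mpoly \<Rightarrow> ('v \<Rightarrow> 'k) \<Rightarrow> 'k" where
  "mpoly_eval P a = mpoly_hom id a P"

definition mpoly_vars :: "('v, 'k::zero) mpoly \<Rightarrow> 'v set" where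
  "mpoly_vars P = (\<Union>m\<in>Poly_Mapping.keys P. Poly_Mapping.keys m)"

(* the polynomial ring F2bar[ c_S : S \<subseteq> [n] ] (resp. F2bar[ b_H : H \<subseteq> [n] ]) *)
definition PolyRing :: "nat \<Rightarrow> (nat set, F2bar) mpoly set" where
  "PolyRing n = {P. mpoly_vars P \<subseteq> Pow {1..n}}"

definition ideal_span :: "'a::comm_ring_1 set \<Rightarrow> 'a set \<Rightarrow> 'a set" where
  "ideal_span R G = {(\<Sum>g\<in>F. q g * g) | F q. finite F \<and> F \<subseteq> G \<and> (\<forall>g\<in>F. q g \<in> R)}"

definition ideal_plus :: "'a::comm_ring_1 set \<Rightarrow> 'a set \<Rightarrow> 'a set" where
  "ideal_plus I J = {a + b | a b. a \<in> I \<and> b \<in> J}"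

definition r_idx :: "(nat \<Rightarrow> nat) \<Rightarrow> nat \<Rightarrow> nat set \<Rightarrow> nat" where
  "r_idx \<sigma> n S = (if S = {} then 0 else Max {k \<in> {1..n}. \<sigma> k \<in> S})"

definition completion :: "(nat \<Rightarrow> nat) \<Rightarrow> nat \<Rightarrow> nat set \<Rightarrow> nat set" where
  "completion \<sigma> n S = \<sigma> ` {1..r_idx \<sigma> n S}"

definition I_sigma :: "nat \<Rightarrow> (nat \<Rightarrow> nat) \<Rightarrow> (nat set, F2bar) mpoly set" where
  "I_sigma n \<sigma> = ideal_span (PolyRing n)
     ({Var {1..n} - 1} \<union>
      {Var S - Var (completion \<sigma> n S) *
          (\<Prod>k\<in>{k \<in> {1..r_idx \<sigma> n S}. \<sigma> k \<notin> S}. Var ({1..n} - {\<sigma> k})) | S. S \<subset> {1..n}})"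

definition I_Vncf :: "nat \<Rightarrow> (nat set, F2bar) mpoly set" where
  "I_Vncf n = (\<Inter>\<sigma>\<in>{\<sigma>. \<sigma> permutes {1..n}}. I_sigma n \<sigma>)"

definition emb :: "bit \<Rightarrow> F2bar" where
  "emb b = (if b = 0 then 0 else 1)"

(* polynomials in x_1..x_n with coefficients in F2bar[b_H] *)
type_synonym xpoly = "(nat, (nat set, F2bar) mpoly) mpoly"

definition XC :: "bit \<Rightarrow> xpoly" where
  "XC a = Const (Const (emb a))"

definition delta :: "nat \<Rightarrow> (nat \<Rightarrow> bit) \<Rightarrow> xpoly" where
  "delta n sj = (\<Prod>e\<in>{1..n}. 1 - (Var e - XC (sj e)))"

definition f_data :: "nat \<Rightarrow> nat \<Rightarrow> (nat \<Rightarrow> nat \<Rightarrow> bit) \<Rightarrow> (nat \<Rightarrow> nat \<Rightarrow> bit) \<Rightarrow> nat \<Rightarrow> xpoly" where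
  "f_data n r s t i = (\<Sum>j\<in>{1..r}. XC (t j i) * delta n (s j))"

definition p_data :: "nat \<Rightarrow> nat \<Rightarrow> (nat \<Rightarrow> nat \<Rightarrow> bit) \<Rightarrow> xpoly" where
  "p_data n r s = (\<Prod>j\<in>{1..r}. 1 - delta n (s j))"

definition B_poly :: "nat \<Rightarrow> xpoly" where
  "B_poly n = (\<Sum>H\<in>Pow {1..n}. Const (Var H) * (\<Prod>l\<in>H. Var l))"

(* W_S: coefficient of prod_{l\<in>S} x_l in the reduction of f_i + B p modulo <x_e^2 - x_e>;
   the reduction sends the monomial x^m to prod_{l \<in> supp m} x_l *)
definition W :: "nat \<Rightarrow> nat \<Rightarrow> (nat \<Rightarrow> nat \<Rightarrow> bit) \<Rightarrow> (nat \<Rightarrow> nat \<Rightarrow> bit) \<Rightarrow> nat \<Rightarrow> nat set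
                 \<Rightarrow> (nat set, F2bar) mpoly" where
  "W n r s t i S =
     (let P = f_data n r s t i + B_poly n * p_data n r s
      in \<Sum>m\<in>{m \<in> Poly_Mapping.keys P. Poly_Mapping.keys m = S}. Poly_Mapping.lookup P m)"

definition Phi :: "nat \<Rightarrow> nat \<Rightarrow> (nat \<Rightarrow> nat \<Rightarrow> bit) \<Rightarrow> (nat \<Rightarrow> nat \<Rightarrow> bit) \<Rightarrow> nat
                   \<Rightarrow> (nat set, F2bar) mpoly \<Rightarrow> (nat set, F2bar) mpoly" where
  "Phi n r s t i P = mpoly_hom Const (W n r s t i) P"

definition ker_Phi :: "nat \<Rightarrow> nat \<Rightarrow> (nat \<Rightarrow> nat \<Rightarrow> bit) \<Rightarrow> (nat \<Rightarrow> nat \<Rightarrow> bit) \<Rightarrow> nat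
                       \<Rightarrow> (nat set, F2bar) mpoly set" where
  "ker_Phi n r s t i = {P \<in> PolyRing n. Phi n r s t i P = 0}"

definition bool_fun :: "nat \<Rightarrow> (nat set \<Rightarrow> bit) \<Rightarrow> (nat \<Rightarrow> bit) \<Rightarrow> bit" where
  "bool_fun n c x = (\<Sum>S\<in>Pow {1..n}. c S * (\<Prod>l\<in>S. x l))"

definition depends_on_all :: "nat \<Rightarrow> ((nat \<Rightarrow> bit) \<Rightarrow> bit) \<Rightarrow> bool" where
  "depends_on_all n h = (\<forall>e\<in>{1..n}. \<exists>x. h x \<noteq> h (x(e := 1 + x e)))"

definition nested_canalyzing :: "nat \<Rightarrow> ((nat \<Rightarrow> bit) \<Rightarrow> bit) \<Rightarrow> bool" where
  "nested_canalyzing n h =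
     (depends_on_all n h \<and>
      (\<exists>\<sigma> a b. \<sigma> permutes {1..n} \<and>
        (\<forall>x. (\<forall>k\<in>{1..n}. (\<forall>l\<in>{1..<k}. x (\<sigma> l) \<noteq> a l) \<and> x (\<sigma> k) = a k \<longrightarrow> h x = b k)
           \<and> ((\<forall>k\<in>{1..n}. x (\<sigma> k) \<noteq> a k) \<longrightarrow> h x = 1 + b n))))"

end

theory Submission
  imports Defs
begin

text \<open>
  Evaluation at a point \<open>c\<close> of \<open>\<bbbF>\<^sub>2\<close>-coefficients is a ring homomorphism, so \<open>c\<close> is a zero of
  \<open>\<bbbI>(V\<^sup>n\<^sup>c\<^sup>f) + ker \<Phi>\<close> iff it is a zero of both summands.

  The zero set of the finite intersection of the ideals \<open>I\<^sub>\<sigma>\<close> is the union of their zero sets, and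
  \<open>c\<close> annihilates the generators of \<open>I\<^sub>\<sigma>\<close> iff \<open>c\<^sub>S = d(r\<^sub>S) \<Prod> a\<^sub>k\<close>, where \<open>d(r)\<close> is the
  coefficient of \<open>x\<^sub>\<sigma>\<^sub>(\<^sub>1\<^sub>)\<cdots>x\<^sub>\<sigma>\<^sub>(\<^sub>r\<^sub>)\<close>, \<open>a\<^sub>k\<close> that of the monomial missing only \<open>x\<^sub>\<sigma>\<^sub>(\<^sub>k\<^sub>)\<close>,
  and \<open>d(n) = 1\<close>. Grouping the monomials of such a \<open>c\<close> by \<open>r\<^sub>S\<close> exhibits its Boolean function as
  nested canalyzing in the order \<open>\<sigma>\<close> with canalyzing values \<open>a\<^sub>k\<close>. Conversely, the outputs of a
  nested canalyzing function determine \<open>d\<close> by a triangular recursion, and uniqueness of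
  multilinear representations recovers \<open>c\<close>.

  At Boolean points \<open>p\<close> vanishes on the data and is \<open>1\<close> elsewhere, so \<open>f\<^sub>i + h p = h\<close> iff \<open>h\<close>
  fits the data. If \<open>h\<^sub>c\<close> fits, comparing multilinear coefficients gives \<open>W\<^sub>S(c) = c\<^sub>S\<close>, hence
  \<open>\<Phi>(P)(c) = P(c)\<close> and \<open>ker \<Phi>\<close> vanishes at \<open>c\<close>; conversely the linear forms
  \<open>h\<^sub>c(s\<^sub>j) - t\<^sub>j\<^sub>,\<^sub>i\<close> lie in \<open>ker \<Phi>\<close>.
\<close>

section \<open>Ring homomorphisms and polynomial evaluation\<close>

declare add_bit_eq_xor [simp del] mult_bit_eq_and [simp del] minus_bit_def [simp del]

definition is_ring_hom :: "('a::comm_ring_1 \<Rightarrow> 'b::comm_ring_1) \<Rightarrow> bool" where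
  "is_ring_hom f \<longleftrightarrow>
     f 0 = 0 \<and> f 1 = 1 \<and> (\<forall>x y. f (x + y) = f x + f y) \<and> (\<forall>x y. f (x * y) = f x * f y)"

lemma is_ring_hom_0: "is_ring_hom f \<Longrightarrow> f 0 = 0"
  and is_ring_hom_1: "is_ring_hom f \<Longrightarrow> f 1 = 1"
  and is_ring_hom_add: "is_ring_hom f \<Longrightarrow> f (x + y) = f x + f y"
  and is_ring_hom_mult: "is_ring_hom f \<Longrightarrow> f (x * y) = f x * f y"
  by (simp_all add: is_ring_hom_def)

lemma is_ring_hom_uminus: "is_ring_hom f \<Longrightarrow> f (- x) = - f x"
  by (metis add.right_inverse add_eq_0_iff is_ring_hom_0 is_ring_hom_add)

lemma is_ring_hom_diff: "is_ring_hom f \<Longrightarrow> f (x - y) = f x - f y"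
  using is_ring_hom_add[of f x "- y"] is_ring_hom_uminus[of f y] by simp

lemma is_ring_hom_sum: "is_ring_hom f \<Longrightarrow> f (\<Sum>x\<in>A. g x) = (\<Sum>x\<in>A. f (g x))"
  by (induction A rule: infinite_finite_induct) (auto simp: is_ring_hom_0 is_ring_hom_add)

lemma is_ring_hom_prod: "is_ring_hom f \<Longrightarrow> f (\<Prod>x\<in>A. g x) = (\<Prod>x\<in>A. f (g x))"
  by (induction A rule: infinite_finite_induct) (auto simp: is_ring_hom_1 is_ring_hom_mult)

lemma is_ring_hom_power: "is_ring_hom f \<Longrightarrow> f (x ^ k) = f x ^ k"
  by (induction k) (auto simp: is_ring_hom_1 is_ring_hom_mult)

lemmas is_ring_hom_simps =
  is_ring_hom_0 is_ring_hom_1 is_ring_hom_add is_ring_hom_mult is_ring_hom_uminus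
  is_ring_hom_diff is_ring_hom_sum is_ring_hom_prod is_ring_hom_power

lemma is_ring_hom_id: "is_ring_hom id"
  by (simp add: is_ring_hom_def)

lemma is_ring_hom_comp: "is_ring_hom f \<Longrightarrow> is_ring_hom g \<Longrightarrow> is_ring_hom (f \<circ> g)"
  by (simp add: is_ring_hom_def)

lemma is_ring_hom_Const: "is_ring_hom (Const :: 'a::comm_ring_1 \<Rightarrow> ('v, 'a) mpoly)"
  unfolding is_ring_hom_def Const_def by (simp add: single_add mult_single)

lemma emb_eq_to_ac: "emb = to_ac"
  by (rule ext) (auto simp: emb_def)

lemma is_ring_hom_emb: "is_ring_hom emb"
  by (simp add: is_ring_hom_def emb_eq_to_ac)

definition monom_val :: "('v \<Rightarrow> 'r::comm_ring_1) \<Rightarrow> ('v \<Rightarrow>\<^sub>0 nat) \<Rightarrow> 'r" where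
  "monom_val a m = (\<Prod>v\<in>Poly_Mapping.keys m. a v ^ Poly_Mapping.lookup m v)"

lemma monom_val_0 [simp]: "monom_val a 0 = 1"
  by (simp add: monom_val_def)

lemma monom_val_superset:
  assumes "finite K" "Poly_Mapping.keys m \<subseteq> K"
  shows "monom_val a m = (\<Prod>v\<in>K. a v ^ Poly_Mapping.lookup m v)"
  unfolding monom_val_def
  by (rule prod.mono_neutral_left) (use assms in \<open>auto simp: in_keys_iff\<close>)

lemma monom_val_add: "monom_val a (m + m') = monom_val a m * monom_val a m'"
proof -
  let ?K = "Poly_Mapping.keys m \<union> Poly_Mapping.keys m'"
  have "monom_val a (m + m') = (\<Prod>v\<in>?K. a v ^ Poly_Mapping.lookup (m + m') v)"
    by (rule monom_val_superset) (simp_all add: keys_add)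
  also have "\<dots> = (\<Prod>v\<in>?K. a v ^ Poly_Mapping.lookup m v) * (\<Prod>v\<in>?K. a v ^ Poly_Mapping.lookup m' v)"
    by (simp add: lookup_add power_add prod.distrib)
  also have "\<dots> = monom_val a m * monom_val a m'"
    by (subst (1 2) monom_val_superset[of ?K]) auto
  finally show ?thesis .
qed

lemma mpoly_hom_monom_val:
  "mpoly_hom phi a P = (\<Sum>m\<in>Poly_Mapping.keys P. phi (Poly_Mapping.lookup P m) * monom_val a m)"
  by (simp add: mpoly_hom_def monom_val_def)

lemma mpoly_hom_superset:
  assumes "phi 0 = 0" "finite K" "Poly_Mapping.keys P \<subseteq> K"
  shows "mpoly_hom phi a P = (\<Sum>m\<in>K. phi (Poly_Mapping.lookup P m) * monom_val a m)"
  unfolding mpoly_hom_monom_val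
  by (rule sum.mono_neutral_left) (use assms in \<open>auto simp: in_keys_iff\<close>)

lemma mpoly_hom_0: "mpoly_hom phi a 0 = 0"
  by (simp add: mpoly_hom_def)

lemma mpoly_hom_single:
  "phi 0 = 0 \<Longrightarrow> mpoly_hom phi a (Poly_Mapping.single m c) = phi c * monom_val a m"
  by (simp add: mpoly_hom_monom_val)

lemma mpoly_hom_add:
  assumes "is_ring_hom phi"
  shows "mpoly_hom phi a (P + Q) = mpoly_hom phi a P + mpoly_hom phi a Q"
proof -
  let ?K = "Poly_Mapping.keys P \<union> Poly_Mapping.keys Q"
  have phi0: "phi 0 = 0" using assms by (rule is_ring_hom_0)
  have "mpoly_hom phi a (P + Q) = (\<Sum>m\<in>?K. phi (Poly_Mapping.lookup (P + Q) m) * monom_val a m)"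
    by (rule mpoly_hom_superset) (use keys_add[of P Q] phi0 in auto)
  also have "\<dots> = (\<Sum>m\<in>?K. phi (Poly_Mapping.lookup P m) * monom_val a m)
                 + (\<Sum>m\<in>?K. phi (Poly_Mapping.lookup Q m) * monom_val a m)"
    by (simp add: lookup_add is_ring_hom_add[OF assms] distrib_right sum.distrib)
  also have "\<dots> = mpoly_hom phi a P + mpoly_hom phi a Q"
    by (subst (1 2) mpoly_hom_superset[of phi ?K]) (auto simp: phi0)
  finally show ?thesis .
qed

lemma mpoly_hom_sum:
  "is_ring_hom phi \<Longrightarrow> mpoly_hom phi a (\<Sum>x\<in>A. g x) = (\<Sum>x\<in>A. mpoly_hom phi a (g x))"
  by (induction A rule: infinite_finite_induct) (auto simp: mpoly_hom_0 mpoly_hom_add)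

lemma poly_mapping_sum_single:
  "P = (\<Sum>m\<in>Poly_Mapping.keys P. Poly_Mapping.single m (Poly_Mapping.lookup P m))"
  by (rule poly_mapping_eqI) (simp add: lookup_sum lookup_single when_def in_keys_iff)

lemma mpoly_hom_mult:
  assumes "is_ring_hom phi"
  shows "mpoly_hom phi a (P * Q) = mpoly_hom phi a P * mpoly_hom phi a Q"
proof -
  let ?s = "\<lambda>P m. Poly_Mapping.single m (Poly_Mapping.lookup P m)"
  have "P * Q = (\<Sum>m\<in>Poly_Mapping.keys P. ?s P m) * (\<Sum>m'\<in>Poly_Mapping.keys Q. ?s Q m')"
    by (subst (1) poly_mapping_sum_single, subst (2) poly_mapping_sum_single) (rule refl)
  also have "\<dots> = (\<Sum>m\<in>Poly_Mapping.keys P. \<Sum>m'\<in>Poly_Mapping.keys Q. ?s P m * ?s Q m')"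
    by (rule sum_product)
  finally have PQ: "P * Q = \<dots>" .
  have "mpoly_hom phi a (P * Q) = (\<Sum>m\<in>Poly_Mapping.keys P. \<Sum>m'\<in>Poly_Mapping.keys Q.
      phi (Poly_Mapping.lookup P m) * monom_val a m * (phi (Poly_Mapping.lookup Q m') * monom_val a m'))"
    unfolding PQ mpoly_hom_sum[OF assms] mult_single
    by (simp add: mpoly_hom_single is_ring_hom_0[OF assms] is_ring_hom_mult[OF assms]
        monom_val_add mult_ac)
  also have "\<dots> = mpoly_hom phi a P * mpoly_hom phi a Q"
    unfolding mpoly_hom_monom_val sum_product ..
  finally show ?thesis .
qed

lemma mpoly_hom_Const: "is_ring_hom phi \<Longrightarrow> mpoly_hom phi a (Const c) = phi c"
  by (simp add: Const_def mpoly_hom_single is_ring_hom_0)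

lemma mpoly_hom_Var: "is_ring_hom phi \<Longrightarrow> mpoly_hom phi a (Var v) = a v"
  by (simp add: Var_def mpoly_hom_single is_ring_hom_0 is_ring_hom_1 monom_val_def)

lemma is_ring_hom_mpoly_hom: "is_ring_hom phi \<Longrightarrow> is_ring_hom (mpoly_hom phi a)"
  using mpoly_hom_Const[of phi a 1] mpoly_hom_Const[of phi a 0]
  by (auto simp: is_ring_hom_def mpoly_hom_add mpoly_hom_mult Const_def)

lemma is_ring_hom_mpoly_eval: "is_ring_hom (\<lambda>P. mpoly_eval P b)"
  using is_ring_hom_mpoly_hom[OF is_ring_hom_id] by (simp add: mpoly_eval_def[abs_def])

lemma mpoly_eval_0 [simp]: "mpoly_eval 0 b = 0"
  by (simp add: mpoly_eval_def mpoly_hom_0)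

lemma mpoly_eval_Var [simp]: "mpoly_eval (Var v) b = b v"
  unfolding mpoly_eval_def by (rule mpoly_hom_Var[OF is_ring_hom_id])

lemma mpoly_eval_Const [simp]: "mpoly_eval (Const u) b = u"
  unfolding mpoly_eval_def by (simp add: mpoly_hom_Const[OF is_ring_hom_id])

lemma mpoly_hom_compose:
  assumes "is_ring_hom rho"
  shows "rho (mpoly_hom phi a P) = mpoly_hom (rho \<circ> phi) (rho \<circ> a) P"
  by (simp add: mpoly_hom_def is_ring_hom_simps[OF assms])

section \<open>Variables and multilinear reduction\<close>

lemma mpoly_vars_mult:
  "mpoly_vars (P * Q :: ('v, 'k::comm_ring_1) mpoly) \<subseteq> mpoly_vars P \<union> mpoly_vars Q"
proof
  fix v assume "v \<in> mpoly_vars (P * Q)"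
  then obtain m where m: "m \<in> Poly_Mapping.keys (P * Q)" "v \<in> Poly_Mapping.keys m"
    by (auto simp: mpoly_vars_def)
  then obtain m1 m2 where "m = m1 + m2" "m1 \<in> Poly_Mapping.keys P" "m2 \<in> Poly_Mapping.keys Q"
    using keys_mult[of P Q] by blast
  with m(2) keys_add[of m1 m2] show "v \<in> mpoly_vars P \<union> mpoly_vars Q"
    by (auto simp: mpoly_vars_def)
qed

lemma mpoly_vars_subsetI:
  fixes P Q :: "('v, 'k::comm_ring_1) mpoly"
  shows "mpoly_vars (0 :: ('v, 'k) mpoly) \<subseteq> V"
    and "mpoly_vars (1 :: ('v, 'k) mpoly) \<subseteq> V"
    and "mpoly_vars (Const c :: ('v, 'k) mpoly) \<subseteq> V"
    and "v \<in> V \<Longrightarrow> mpoly_vars (Var v :: ('v, 'k) mpoly) \<subseteq> V"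
    and "mpoly_vars P \<subseteq> V \<Longrightarrow> mpoly_vars Q \<subseteq> V \<Longrightarrow> mpoly_vars (P + Q) \<subseteq> V"
    and "mpoly_vars P \<subseteq> V \<Longrightarrow> mpoly_vars Q \<subseteq> V \<Longrightarrow> mpoly_vars (P - Q) \<subseteq> V"
    and "mpoly_vars P \<subseteq> V \<Longrightarrow> mpoly_vars Q \<subseteq> V \<Longrightarrow> mpoly_vars (P * Q) \<subseteq> V"
    and "(\<And>a. a \<in> A \<Longrightarrow> mpoly_vars (f a :: ('v, 'k) mpoly) \<subseteq> V) \<Longrightarrow> mpoly_vars (sum f A) \<subseteq> V"
    and "(\<And>a. a \<in> A \<Longrightarrow> mpoly_vars (f a :: ('v, 'k) mpoly) \<subseteq> V) \<Longrightarrow> mpoly_vars (prod f A) \<subseteq> V"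
proof -
  show "mpoly_vars (0 :: ('v, 'k) mpoly) \<subseteq> V" "mpoly_vars (1 :: ('v, 'k) mpoly) \<subseteq> V"
    by (simp_all add: mpoly_vars_def)
  show "mpoly_vars (Const c :: ('v, 'k) mpoly) \<subseteq> V"
    by (simp add: mpoly_vars_def Const_def)
  show "v \<in> V \<Longrightarrow> mpoly_vars (Var v :: ('v, 'k) mpoly) \<subseteq> V"
    by (simp add: mpoly_vars_def Var_def)
  show "mpoly_vars P \<subseteq> V \<Longrightarrow> mpoly_vars Q \<subseteq> V \<Longrightarrow> mpoly_vars (P + Q) \<subseteq> V"
    using keys_add[of P Q] unfolding mpoly_vars_def by blast
  show "mpoly_vars P \<subseteq> V \<Longrightarrow> mpoly_vars Q \<subseteq> V \<Longrightarrow> mpoly_vars (P - Q) \<subseteq> V"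
    using keys_diff[of P Q] unfolding mpoly_vars_def by blast
  show "mpoly_vars P \<subseteq> V \<Longrightarrow> mpoly_vars Q \<subseteq> V \<Longrightarrow> mpoly_vars (P * Q) \<subseteq> V"
    using mpoly_vars_mult[of P Q] by auto
  show "(\<And>a. a \<in> A \<Longrightarrow> mpoly_vars (f a :: ('v, 'k) mpoly) \<subseteq> V) \<Longrightarrow> mpoly_vars (sum f A) \<subseteq> V"
    using keys_sum[of f A] unfolding mpoly_vars_def by blast
  show "(\<And>a. a \<in> A \<Longrightarrow> mpoly_vars (f a :: ('v, 'k) mpoly) \<subseteq> V) \<Longrightarrow> mpoly_vars (prod f A) \<subseteq> V"
  proof (induction A rule: infinite_finite_induct)
    case (insert a A)
    then show ?case using mpoly_vars_mult[of "f a" "prod f A"] by auto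
  qed (simp_all add: mpoly_vars_def)
qed

lemma prod_indicator:
  assumes "finite U"
  shows "(\<Prod>l\<in>U. if l \<in> S then 1 else 0 :: 'a::comm_ring_1) = (if U \<subseteq> S then 1 else 0)"
  using assms by (auto intro!: prod.neutral prod_zero)

lemma multilinear_coeffs_eq_0:
  fixes d :: "'v set \<Rightarrow> 'a::comm_ring_1"
  assumes fin: "finite N"
    and zero: "\<And>x::'v \<Rightarrow> 'a. (\<forall>l. x l = 0 \<or> x l = 1) \<Longrightarrow> (\<Sum>S\<in>Pow N. d S * (\<Prod>l\<in>S. x l)) = 0"
  shows "\<forall>S\<in>Pow N. d S = 0"
proof (rule ccontr)
  let ?Z = "{S\<in>Pow N. d S \<noteq> 0}"
  assume "\<not> ?thesis"
  then have "?Z \<noteq> {}" "finite ?Z" using fin by auto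
  then obtain S where S: "S \<in> ?Z" and min: "\<not> (\<exists>T\<in>?Z. T < S)"
    using ex_min_if_finite[of ?Z] by blast
  \<comment> \<open>evaluating at the indicator of a minimal \<open>S\<close> with \<open>d S \<noteq> 0\<close> isolates \<open>d S\<close>\<close>
  let ?x = "\<lambda>l. if l \<in> S then 1 else 0 :: 'a"
  have "0 = (\<Sum>U\<in>Pow N. d U * (\<Prod>l\<in>U. ?x l))" using zero[of ?x] by auto
  also have "\<dots> = (\<Sum>U\<in>Pow N. if U \<subseteq> S then d U else 0)"
    using fin by (intro sum.cong refl) (auto simp: prod_indicator finite_subset)
  also have "\<dots> = (\<Sum>U\<in>Pow S. d U)"
    using S fin by (intro sum.mono_neutral_cong_right) auto
  also have "\<dots> = d S + (\<Sum>U\<in>Pow S - {S}. d U)"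
    using S fin finite_subset by (subst sum.remove[of _ S]) auto
  also have "(\<Sum>U\<in>Pow S - {S}. d U) = 0"
    using S min by (intro sum.neutral) auto
  finally show False using S by simp
qed

lemma power_eq_self_if_idem: "(x::'a::monoid_mult) * x = x \<Longrightarrow> k \<ge> 1 \<Longrightarrow> x ^ k = x"
proof (induction k)
  case (Suc k)
  then show ?case by (cases k) auto
qed simp

definition reduced_coeff :: "('v, 'k::comm_monoid_add) mpoly \<Rightarrow> 'v set \<Rightarrow> 'k" where
  "reduced_coeff P S = (\<Sum>m\<in>{m \<in> Poly_Mapping.keys P. Poly_Mapping.keys m = S}. Poly_Mapping.lookup P m)"

lemma reduced_coeff_eq_0:
  assumes "mpoly_vars P \<subseteq> N" and "\<not> S \<subseteq> N"
  shows "reduced_coeff P S = 0"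
proof -
  have empty: "{m \<in> Poly_Mapping.keys P. Poly_Mapping.keys m = S} = {}"
    using assms by (auto simp: mpoly_vars_def)
  show ?thesis unfolding reduced_coeff_def empty by simp
qed

lemma mpoly_hom_idem_eq_reduced:
  fixes P :: "('v, 'k::comm_ring_1) mpoly" and phi :: "'k \<Rightarrow> 'r::comm_ring_1"
  assumes hom: "is_ring_hom phi" and idem: "\<And>v. a v * a v = a v"
    and fin: "finite N" and vars: "mpoly_vars P \<subseteq> N"
  shows "mpoly_hom phi a P = (\<Sum>S\<in>Pow N. phi (reduced_coeff P S) * (\<Prod>l\<in>S. a l))"
proof -
  have monom: "monom_val a m = (\<Prod>l\<in>Poly_Mapping.keys m. a l)" for m
    unfolding monom_val_def
    by (rule prod.cong[OF refl], rule power_eq_self_if_idem[OF idem]) (auto simp: in_keys_iff)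
  have "(\<Sum>S\<in>Pow N. phi (reduced_coeff P S) * (\<Prod>l\<in>S. a l))
      = (\<Sum>S\<in>Pow N. \<Sum>m\<in>{m \<in> Poly_Mapping.keys P. Poly_Mapping.keys m = S}.
           phi (Poly_Mapping.lookup P m) * (\<Prod>l\<in>Poly_Mapping.keys m. a l))"
    by (simp add: reduced_coeff_def is_ring_hom_sum[OF hom] sum_distrib_right)
  also have "\<dots> = (\<Sum>m\<in>Poly_Mapping.keys P. phi (Poly_Mapping.lookup P m) * (\<Prod>l\<in>Poly_Mapping.keys m. a l))"
    by (rule sum.group) (use fin vars in \<open>auto simp: mpoly_vars_def\<close>)
  finally show ?thesis by (simp add: mpoly_hom_monom_val monom)
qed

section \<open>Nested canalyzing functions and the varieties \<open>V_\<sigma>\<close>\<close>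

lemma bit_cases: "(x::bit) = 0 \<or> x = 1"
  using bit_not_zero_iff by blast

lemma bit_neq_iff: "(x::bit) \<noteq> a \<longleftrightarrow> x = a + 1"
  using bit_cases[of x] bit_cases[of a] by auto

lemma bit_neq_iff_add_eq_1: "(x::bit) \<noteq> a \<longleftrightarrow> x + a = 1"
  using bit_cases[of x] bit_cases[of a] by auto

lemma bit_neq_1_add: "(a::bit) \<noteq> 1 + a"
  using bit_cases[of a] by auto

lemma r_idx_empty [simp]: "r_idx \<sigma> n {} = 0"
  by (simp add: r_idx_def)

lemma r_idx_image:
  assumes p: "\<sigma> permutes {1..n}" and K: "K \<subseteq> {1..n}" "K \<noteq> {}"
  shows "r_idx \<sigma> n (\<sigma> ` K) = Max K"
proof -
  have "{k \<in> {1..n}. \<sigma> k \<in> \<sigma> ` K} = K"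
    using K inj_image_mem_iff[OF permutes_inj[OF p]] by auto
  then show ?thesis using K by (simp add: r_idx_def)
qed

lemma r_idx_mem:
  assumes p: "\<sigma> permutes {1..n}" and S: "S \<subseteq> {1..n}" "S \<noteq> {}"
  shows "r_idx \<sigma> n S \<in> {1..n}" "\<sigma> (r_idx \<sigma> n S) \<in> S"
proof -
  let ?K = "{k \<in> {1..n}. \<sigma> k \<in> S}"
  obtain s where "s \<in> S" using S by auto
  then have "inv_into UNIV \<sigma> s \<in> ?K"
    using S permutes_inverses(1)[OF p, of s] permutes_in_image[OF p, of "inv_into UNIV \<sigma> s"] by auto
  then have "Max ?K \<in> ?K" by (intro Max_in) auto
  then show "r_idx \<sigma> n S \<in> {1..n}" "\<sigma> (r_idx \<sigma> n S) \<in> S" using S by (auto simp: r_idx_def)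
qed

text \<open>The points of \<open>V_\<sigma>\<close>: with \<open>d r = c_{\<sigma>(1),\<dots>,\<sigma>(r)}\<close> and \<open>a k = c_{[n]-{\<sigma>(k)}}\<close>,
  the defining relations say \<open>c_S = d(r_S) \<Prod> a k\<close>, the product over \<open>k \<le> r_S\<close> with \<open>\<sigma>(k) \<notin> S\<close>.\<close>

definition ncf_coeffs :: "(nat \<Rightarrow> nat) \<Rightarrow> nat \<Rightarrow> (nat \<Rightarrow> bit) \<Rightarrow> (nat \<Rightarrow> bit) \<Rightarrow> nat set \<Rightarrow> bit" where
  "ncf_coeffs \<sigma> n d a S =
     (if S \<subseteq> {1..n} then d (r_idx \<sigma> n S) * (\<Prod>k\<in>{k\<in>{1..r_idx \<sigma> n S}. \<sigma> k \<notin> S}. a k) else 0)"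

definition ncf_relations :: "(nat \<Rightarrow> nat) \<Rightarrow> nat \<Rightarrow> (nat set \<Rightarrow> bit) \<Rightarrow> bool" where
  "ncf_relations \<sigma> n c \<longleftrightarrow> c {1..n} = 1 \<and> (\<forall>S. S \<subset> {1..n} \<longrightarrow>
     c S = c (completion \<sigma> n S) * (\<Prod>k\<in>{k \<in> {1..r_idx \<sigma> n S}. \<sigma> k \<notin> S}. c ({1..n} - {\<sigma> k})))"

lemma ncf_coeffs_empty [simp]: "ncf_coeffs \<sigma> n d a {} = d 0"
  by (simp add: ncf_coeffs_def)

lemma ncf_coeffs_image:
  assumes p: "\<sigma> permutes {1..n}" and K: "K \<subseteq> {1..n}" "K \<noteq> {}"
  shows "ncf_coeffs \<sigma> n d a (\<sigma> ` K) = d (Max K) * (\<Prod>k\<in>{1..Max K} - K. a k)"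
proof -
  have "\<sigma> ` K \<subseteq> {1..n}" using K permutes_image[OF p] by auto
  moreover have "{k \<in> {1..Max K}. \<sigma> k \<notin> \<sigma> ` K} = {1..Max K} - K"
    using inj_image_mem_iff[OF permutes_inj[OF p]] by auto
  ultimately show ?thesis using r_idx_image[OF p K] by (simp add: ncf_coeffs_def)
qed

lemma ncf_coeffs_insert:
  assumes p: "\<sigma> permutes {1..n}" and r: "r \<in> {1..n}" and T: "T \<subseteq> {1..<r}"
  shows "ncf_coeffs \<sigma> n d a (\<sigma> ` insert r T) = d r * (\<Prod>k\<in>{1..<r} - T. a k)"
proof -
  have "Max (insert r T) = r" using T finite_subset[OF T] by (auto intro!: Max_eqI)
  moreover have "{1..r} - insert r T = {1..<r} - T" using T by auto
  moreover have "insert r T \<subseteq> {1..n}" using r T by auto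
  ultimately show ?thesis using ncf_coeffs_image[OF p, of "insert r T"] by auto
qed

lemma ncf_coeffs_initial:
  assumes p: "\<sigma> permutes {1..n}" and r: "r \<in> {1..n}"
  shows "ncf_coeffs \<sigma> n d a (\<sigma> ` {1..r}) = d r"
proof -
  have "insert r {1..<r} = {1..r}" using r by auto
  then show ?thesis using ncf_coeffs_insert[OF p r, of "{1..<r}"] by simp
qed

lemma ncf_coeffs_top:
  assumes p: "\<sigma> permutes {1..n}" and n: "n \<ge> 1"
  shows "ncf_coeffs \<sigma> n d a {1..n} = d n"
  using ncf_coeffs_initial[OF p, of n] n permutes_image[OF p] by simp

lemma ncf_coeffs_complement:
  assumes p: "\<sigma> permutes {1..n}" and k: "k \<in> {1..<n}"
  shows "ncf_coeffs \<sigma> n d a ({1..n} - {\<sigma> k}) = d n * a k"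
proof -
  have "n \<in> {1..n} - {k}" using k by auto
  then have sub: "{1..n} - {k} \<subseteq> {1..n}" and ne: "{1..n} - {k} \<noteq> {}" by auto
  have "{1..n} - {\<sigma> k} = \<sigma> ` ({1..n} - {k})"
    using permutes_image[OF p] image_set_diff[OF permutes_inj[OF p]] by auto
  moreover have "Max ({1..n} - {k}) = n" using k by (intro Max_eqI) auto
  moreover have "{1..n} - ({1..n} - {k}) = {k}" using k by auto
  ultimately show ?thesis using ncf_coeffs_image[OF p sub ne] by simp
qed

lemma ncf_relations_imp_eq_ncf_coeffs:
  assumes p: "\<sigma> permutes {1..n}" and n: "n \<ge> 1"
    and supp: "\<forall>S. S \<notin> Pow {1..n} \<longrightarrow> c S = 0" and rel: "ncf_relations \<sigma> n c"
  shows "c = ncf_coeffs \<sigma> n (\<lambda>r. c (\<sigma> ` {1..r})) (\<lambda>k. c ({1..n} - {\<sigma> k}))"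
proof
  fix S
  consider "\<not> S \<subseteq> {1..n}" | "S = {1..n}" | "S \<subset> {1..n}" by blast
  then show "c S = ncf_coeffs \<sigma> n (\<lambda>r. c (\<sigma> ` {1..r})) (\<lambda>k. c ({1..n} - {\<sigma> k})) S"
  proof cases
    case 1
    then show ?thesis using supp by (simp add: ncf_coeffs_def)
  next
    case 2
    then show ?thesis using ncf_coeffs_top[OF p n] permutes_image[OF p] by simp
  next
    case 3
    then have "c S = c (\<sigma> ` {1..r_idx \<sigma> n S}) *
        (\<Prod>k\<in>{k \<in> {1..r_idx \<sigma> n S}. \<sigma> k \<notin> S}. c ({1..n} - {\<sigma> k}))"
      using rel unfolding ncf_relations_def completion_def by blast
    moreover have "S \<subseteq> {1..n}" using 3 by auto
    ultimately show ?thesis by (subst \<open>c S = _\<close>) (simp add: ncf_coeffs_def)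
  qed
qed

lemma ncf_relations_ncf_coeffs:
  assumes p: "\<sigma> permutes {1..n}" and n: "n \<ge> 1" and dn: "d n = 1"
  shows "ncf_relations \<sigma> n (ncf_coeffs \<sigma> n d a)"
  unfolding ncf_relations_def
proof (intro conjI allI impI)
  let ?c = "ncf_coeffs \<sigma> n d a"
  show "?c {1..n} = 1" using ncf_coeffs_top[OF p n] dn by simp
  fix S assume S: "S \<subset> {1..n}"
  let ?r = "r_idx \<sigma> n S"
  show "?c S = ?c (completion \<sigma> n S) * (\<Prod>k\<in>{k \<in> {1..?r}. \<sigma> k \<notin> S}. ?c ({1..n} - {\<sigma> k}))"
  proof (cases "S = {}")
    case True
    then show ?thesis by (simp add: completion_def)
  next
    case False
    have r: "?r \<in> {1..n}" "\<sigma> ?r \<in> S" using r_idx_mem[OF p _ False] S by auto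
    have "?c (completion \<sigma> n S) = d ?r"
      unfolding completion_def by (rule ncf_coeffs_initial[OF p r(1)])
    moreover have "(\<Prod>k\<in>{k \<in> {1..?r}. \<sigma> k \<notin> S}. ?c ({1..n} - {\<sigma> k}))
                 = (\<Prod>k\<in>{k \<in> {1..?r}. \<sigma> k \<notin> S}. a k)"
    proof (rule prod.cong[OF refl])
      fix k assume k: "k \<in> {k \<in> {1..?r}. \<sigma> k \<notin> S}"
      then have "k \<noteq> ?r" using r(2) by auto
      then have "k \<in> {1..<n}" using k r(1) by auto
      then show "?c ({1..n} - {\<sigma> k}) = a k" using ncf_coeffs_complement[OF p] dn by simp
    qed
    ultimately show ?thesis using S by (simp add: ncf_coeffs_def)
  qed
qed

text \<open>The Boolean function of a point of \<open>V_\<sigma>\<close>, its monomials grouped by \<open>r_S\<close>.\<close>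

definition ncf_poly :: "(nat \<Rightarrow> nat) \<Rightarrow> nat \<Rightarrow> (nat \<Rightarrow> bit) \<Rightarrow> (nat \<Rightarrow> bit) \<Rightarrow> (nat \<Rightarrow> bit) \<Rightarrow> bit" where
  "ncf_poly \<sigma> n d a x = d 0 + (\<Sum>r=1..n. d r * x (\<sigma> r) * (\<Prod>j\<in>{1..<r}. x (\<sigma> j) + a j))"

definition canalyzed_value :: "(nat \<Rightarrow> bit) \<Rightarrow> (nat \<Rightarrow> bit) \<Rightarrow> nat \<Rightarrow> bit" where
  "canalyzed_value d a k = d 0 + (\<Sum>r\<in>{1..<k}. d r * (a r + 1)) + d k * a k"

lemma sum_Pow_atLeastAtMost_by_Max:
  fixes F :: "nat set \<Rightarrow> 'a::comm_monoid_add"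
  shows "(\<Sum>K\<in>Pow {1..m}. F K) = F {} + (\<Sum>r=1..m. \<Sum>T\<in>Pow {1..<r}. F (insert r T))"
proof (induction m)
  case (Suc m)
  have disj: "Pow {1..m} \<inter> insert (Suc m) ` Pow {1..m} = {}" by auto
  have inj: "inj_on (insert (Suc m)) (Pow {1..m})"
    by (rule inj_onI) (metis PowD Suc_n_not_le_n atLeastAtMost_iff insert_ident subsetD)
  have Suc_m: "{1..Suc m} = insert (Suc m) {1..m}" by auto
  have "(\<Sum>K\<in>Pow {1..Suc m}. F K) = (\<Sum>K\<in>Pow {1..m}. F K) + (\<Sum>K\<in>insert (Suc m) ` Pow {1..m}. F K)"
    unfolding Suc_m Pow_insert
    by (rule sum.union_disjoint) (use disj in auto)
  also have "(\<Sum>K\<in>insert (Suc m) ` Pow {1..m}. F K) = (\<Sum>T\<in>Pow {1..<Suc m}. F (insert (Suc m) T))"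
    using sum.reindex[OF inj, of F] by (simp add: atLeastLessThanSuc_atLeastAtMost)
  finally show ?case using Suc by (simp add: add.assoc)
qed simp

lemma bool_fun_ncf_coeffs:
  assumes p: "\<sigma> permutes {1..n}"
  shows "bool_fun n (ncf_coeffs \<sigma> n d a) x = ncf_poly \<sigma> n d a x"
proof -
  let ?c = "ncf_coeffs \<sigma> n d a"
  let ?F = "\<lambda>K. ?c (\<sigma> ` K) * (\<Prod>k\<in>K. x (\<sigma> k))"
  have summand: "(\<Sum>T\<in>Pow {1..<r}. ?F (insert r T)) = d r * x (\<sigma> r) * (\<Prod>j\<in>{1..<r}. x (\<sigma> j) + a j)"
    if r: "r \<in> {1..n}" for r
  proof -
    have "(\<Sum>T\<in>Pow {1..<r}. ?F (insert r T))
        = (\<Sum>T\<in>Pow {1..<r}. d r * x (\<sigma> r) * ((\<Prod>k\<in>T. x (\<sigma> k)) * (\<Prod>k\<in>{1..<r} - T. a k)))"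
    proof (rule sum.cong[OF refl])
      fix T assume T: "T \<in> Pow {1..<r}"
      then have "r \<notin> T" "finite T" using finite_subset by auto
      then show "?F (insert r T) = d r * x (\<sigma> r) * ((\<Prod>k\<in>T. x (\<sigma> k)) * (\<Prod>k\<in>{1..<r} - T. a k))"
        using ncf_coeffs_insert[OF p r, of T] T by (simp add: mult_ac)
    qed
    also have "\<dots> = d r * x (\<sigma> r) * (\<Prod>j\<in>{1..<r}. x (\<sigma> j) + a j)"
      by (simp add: prod_add sum_distrib_left)
    finally show ?thesis .
  qed
  have "bool_fun n ?c x = (\<Sum>K\<in>Pow {1..n}. ?c (\<sigma> ` K) * (\<Prod>l\<in>\<sigma> ` K. x l))"
    unfolding bool_fun_def
    by (rule sum.reindex_bij_betw[OF bij_betw_image_Pow[OF permutes_imp_bij[OF p]], symmetric])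
  also have "\<dots> = (\<Sum>K\<in>Pow {1..n}. ?F K)"
    by (intro sum.cong refl) (simp add: prod.reindex[OF inj_on_subset[OF permutes_inj[OF p]]])
  also have "\<dots> = ?F {} + (\<Sum>r=1..n. \<Sum>T\<in>Pow {1..<r}. ?F (insert r T))"
    by (rule sum_Pow_atLeastAtMost_by_Max)
  also have "\<dots> = ncf_poly \<sigma> n d a x"
    using summand by (simp add: ncf_poly_def)
  finally show ?thesis .
qed

lemma ncf_poly_canalyzed:
  assumes k: "k \<in> {1..n}" and before: "\<forall>l\<in>{1..<k}. x (\<sigma> l) \<noteq> a l" and hit: "x (\<sigma> k) = a k"
  shows "ncf_poly \<sigma> n d a x = canalyzed_value d a k"
proof -
  let ?g = "\<lambda>r. d r * x (\<sigma> r) * (\<Prod>j\<in>{1..<r}. x (\<sigma> j) + a j)"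
  have prod1: "(\<Prod>j\<in>{1..<r}. x (\<sigma> j) + a j) = 1" if "r \<le> k" for r
    using before that by (intro prod.neutral) (auto simp: bit_neq_iff_add_eq_1)
  have prod0: "(\<Prod>j\<in>{1..<r}. x (\<sigma> j) + a j) = 0" if "k < r" for r
    using that k hit by (intro prod_zero) (auto intro!: bexI[of _ k])
  have "(\<Sum>r=1..n. ?g r) = (\<Sum>r=1..k. ?g r)"
    using k prod0 by (intro sum.mono_neutral_right) auto
  also have "{1..k} = insert k {1..<k}" using k by auto
  also have "(\<Sum>r\<in>insert k {1..<k}. ?g r) = ?g k + (\<Sum>r\<in>{1..<k}. ?g r)" by simp
  also have "?g k = d k * a k" using hit prod1[of k] by simp
  also have "(\<Sum>r\<in>{1..<k}. ?g r) = (\<Sum>r\<in>{1..<k}. d r * (a r + 1))"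
    using before prod1 by (intro sum.cong[OF refl]) (auto simp: bit_neq_iff)
  finally show ?thesis by (simp add: ncf_poly_def canalyzed_value_def add_ac)
qed

lemma ncf_poly_uncanalyzed:
  assumes n: "n \<ge> 1" and dn: "d n = 1" and miss: "\<forall>k\<in>{1..n}. x (\<sigma> k) \<noteq> a k"
  shows "ncf_poly \<sigma> n d a x = 1 + canalyzed_value d a n"
proof -
  let ?g = "\<lambda>r. d r * x (\<sigma> r) * (\<Prod>j\<in>{1..<r}. x (\<sigma> j) + a j)"
  have prod1: "(\<Prod>j\<in>{1..<r}. x (\<sigma> j) + a j) = 1" if "r \<le> n" for r
    using miss that by (intro prod.neutral) (auto simp: bit_neq_iff_add_eq_1)
  have "{1..n} = insert n {1..<n}" using n by auto
  then have "(\<Sum>r=1..n. ?g r) = ?g n + (\<Sum>r\<in>{1..<n}. ?g r)" by simp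
  also have "?g n = a n + 1" using miss n prod1[of n] dn by (simp add: bit_neq_iff)
  also have "(\<Sum>r\<in>{1..<n}. ?g r) = (\<Sum>r\<in>{1..<n}. d r * (a r + 1))"
    using miss prod1 by (intro sum.cong[OF refl]) (auto simp: bit_neq_iff)
  finally show ?thesis using dn by (simp add: ncf_poly_def canalyzed_value_def add_ac)
qed

definition nested_canalyzing_wrt ::
    "nat \<Rightarrow> (nat \<Rightarrow> nat) \<Rightarrow> (nat \<Rightarrow> bit) \<Rightarrow> (nat \<Rightarrow> bit) \<Rightarrow> ((nat \<Rightarrow> bit) \<Rightarrow> bit) \<Rightarrow> bool" where
  "nested_canalyzing_wrt n \<sigma> a b h \<longleftrightarrow>
     (\<forall>x. (\<forall>k\<in>{1..n}. (\<forall>l\<in>{1..<k}. x (\<sigma> l) \<noteq> a l) \<and> x (\<sigma> k) = a k \<longrightarrow> h x = b k)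
        \<and> ((\<forall>k\<in>{1..n}. x (\<sigma> k) \<noteq> a k) \<longrightarrow> h x = 1 + b n))"

lemma nested_canalyzing_wrt_hit:
  "nested_canalyzing_wrt n \<sigma> a b h \<Longrightarrow> k \<in> {1..n} \<Longrightarrow> \<forall>l\<in>{1..<k}. x (\<sigma> l) \<noteq> a l \<Longrightarrow>
     x (\<sigma> k) = a k \<Longrightarrow> h x = b k"
  unfolding nested_canalyzing_wrt_def by blast

lemma nested_canalyzing_wrt_miss:
  "nested_canalyzing_wrt n \<sigma> a b h \<Longrightarrow> \<forall>k\<in>{1..n}. x (\<sigma> k) \<noteq> a k \<Longrightarrow> h x = 1 + b n"
  unfolding nested_canalyzing_wrt_def by blast

lemma nested_canalyzing_wrt_cong:
  assumes "\<forall>k\<in>{1..n}. b k = b' k" and "n \<ge> 1"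
  shows "nested_canalyzing_wrt n \<sigma> a b h \<longleftrightarrow> nested_canalyzing_wrt n \<sigma> a b' h"
  using assms by (simp add: nested_canalyzing_wrt_def)

lemma nested_canalyzing_iff:
  "nested_canalyzing n h \<longleftrightarrow>
     depends_on_all n h \<and> (\<exists>\<sigma> a b. \<sigma> permutes {1..n} \<and> nested_canalyzing_wrt n \<sigma> a b h)"
  by (simp add: nested_canalyzing_def nested_canalyzing_wrt_def)

definition hit_point :: "(nat \<Rightarrow> nat) \<Rightarrow> (nat \<Rightarrow> bit) \<Rightarrow> nat set \<Rightarrow> nat \<Rightarrow> bit" where
  "hit_point \<sigma> a K v = (let k = inv_into UNIV \<sigma> v in if k \<in> K then a k else a k + 1)"

lemma hit_point_apply:
  "\<sigma> permutes {1..n} \<Longrightarrow> hit_point \<sigma> a K (\<sigma> k) = (if k \<in> K then a k else a k + 1)"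
  by (simp add: hit_point_def permutes_inverses(2))

lemma hit_point_flip:
  assumes p: "\<sigma> permutes {1..n}" and k: "k \<notin> K"
  shows "(hit_point \<sigma> a K)(\<sigma> k := 1 + hit_point \<sigma> a K (\<sigma> k)) = hit_point \<sigma> a (insert k K)"
proof
  fix v
  show "((hit_point \<sigma> a K)(\<sigma> k := 1 + hit_point \<sigma> a K (\<sigma> k))) v = hit_point \<sigma> a (insert k K) v"
  proof (cases "v = \<sigma> k")
    case True
    then show ?thesis using k bit_cases[of "a k"] by (auto simp: hit_point_apply[OF p])
  next
    case False
    then have "inv_into UNIV \<sigma> v \<noteq> k" using permutes_inverses(1)[OF p, of v] by auto
    then show ?thesis using False by (simp add: hit_point_def)
  qed
qed

lemma nested_canalyzing_wrt_hit_point: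
  assumes p: "\<sigma> permutes {1..n}" and h: "nested_canalyzing_wrt n \<sigma> a b h" and K: "K \<subseteq> {1..n}"
  shows "h (hit_point \<sigma> a K) = (if K = {} then 1 + b n else b (Min K))"
proof (cases "K = {}")
  case True
  have "h (hit_point \<sigma> a K) = 1 + b n"
    by (rule nested_canalyzing_wrt_miss[OF h]) (simp add: True hit_point_apply[OF p] bit_neq_iff)
  then show ?thesis using True by simp
next
  case False
  have fin: "finite K" using K finite_subset by auto
  have m: "Min K \<in> K" "Min K \<in> {1..n}" using Min_in[OF fin False] K by auto
  have before: "\<forall>l\<in>{1..<Min K}. hit_point \<sigma> a K (\<sigma> l) \<noteq> a l"
  proof
    fix l assume "l \<in> {1..<Min K}"
    then have "l \<notin> K" using Min_le[OF fin, of l] by auto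
    then show "hit_point \<sigma> a K (\<sigma> l) \<noteq> a l" by (simp add: hit_point_apply[OF p] bit_neq_iff)
  qed
  have "h (hit_point \<sigma> a K) = b (Min K)"
    by (rule nested_canalyzing_wrt_hit[OF h m(2) before]) (simp add: hit_point_apply[OF p] m(1))
  then show ?thesis using False by simp
qed

lemma nested_canalyzing_wrt_depends_on_all:
  assumes p: "\<sigma> permutes {1..n}" and n: "n \<ge> 1" and h: "nested_canalyzing_wrt n \<sigma> a b h"
  shows "depends_on_all n h"
  unfolding depends_on_all_def
proof
  fix e assume e: "e \<in> {1..n}"
  define k where "k = inv_into UNIV \<sigma> e"
  have k: "\<sigma> k = e" "k \<in> {1..n}"
    using e permutes_inverses(1)[OF p, of e] permutes_in_image[OF p, of k] by (auto simp: k_def)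
  let ?pt = "hit_point \<sigma> a"
  note val = nested_canalyzing_wrt_hit_point[OF p h]
  show "\<exists>x. h x \<noteq> h (x(e := 1 + x e))"
  proof (cases "b k = 1 + b n")
    case False
    have "h (?pt {}) = 1 + b n" using val[of "{}"] by simp
    moreover have "h ((?pt {})(e := 1 + ?pt {} e)) = b k"
      using hit_point_flip[OF p, of k "{}"] val[of "{k}"] k by simp
    ultimately have "h (?pt {}) \<noteq> h ((?pt {})(e := 1 + ?pt {} e))" using False by simp
    then show ?thesis by blast
  next
    case True
    then have kn: "k \<noteq> n" using bit_neq_1_add by metis
    have "h (?pt {n}) = b n" using val[of "{n}"] n by simp
    moreover have "h ((?pt {n})(e := 1 + ?pt {n} e)) = b k"
    proof -
      have "(?pt {n})(e := 1 + ?pt {n} e) = ?pt {k, n}" using hit_point_flip[OF p, of k "{n}"] kn k(1) by simp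
      moreover have "Min {k, n} = k" using kn k by auto
      moreover have "{k, n} \<subseteq> {1..n}" using k n by auto
      ultimately show ?thesis using val[of "{k, n}"] by simp
    qed
    ultimately have "h (?pt {n}) \<noteq> h ((?pt {n})(e := 1 + ?pt {n} e))"
      using True bit_neq_1_add[of "b n"] by simp
    then show ?thesis by blast
  qed
qed

lemma nested_canalyzing_wrt_unique:
  assumes h: "nested_canalyzing_wrt n \<sigma> a b h" and g: "nested_canalyzing_wrt n \<sigma> a b g"
  shows "h x = g x"
proof (cases "\<exists>k\<in>{1..n}. x (\<sigma> k) = a k")
  case True
  let ?K = "{k\<in>{1..n}. x (\<sigma> k) = a k}"
  define m where "m = Min ?K"
  have fin: "finite ?K" and ne: "?K \<noteq> {}" using True by auto
  have m: "m \<in> {1..n}" "x (\<sigma> m) = a m" using Min_in[OF fin ne] by (auto simp: m_def)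
  have before: "\<forall>l\<in>{1..<m}. x (\<sigma> l) \<noteq> a l"
  proof
    fix l assume l: "l \<in> {1..<m}"
    show "x (\<sigma> l) \<noteq> a l"
    proof
      assume "x (\<sigma> l) = a l"
      with l m(1) have "l \<in> ?K" by auto
      then have "m \<le> l" unfolding m_def by (rule Min_le[OF fin])
      with l show False by auto
    qed
  qed
  show ?thesis
    using nested_canalyzing_wrt_hit[OF h m(1) before m(2)] nested_canalyzing_wrt_hit[OF g m(1) before m(2)]
    by (rule trans[OF _ sym])
next
  case False
  then have miss: "\<forall>k\<in>{1..n}. x (\<sigma> k) \<noteq> a k" by blast
  show ?thesis
    using nested_canalyzing_wrt_miss[OF h miss] nested_canalyzing_wrt_miss[OF g miss]
    by (rule trans[OF _ sym])
qed

lemma nested_canalyzing_wrt_ncf_coeffs: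
  assumes p: "\<sigma> permutes {1..n}" and n: "n \<ge> 1" and dn: "d n = 1"
  shows "nested_canalyzing_wrt n \<sigma> a (canalyzed_value d a) (bool_fun n (ncf_coeffs \<sigma> n d a))"
  using ncf_poly_canalyzed ncf_poly_uncanalyzed[of n d, OF n dn]
  unfolding nested_canalyzing_wrt_def bool_fun_ncf_coeffs[OF p] by blast

text \<open>Solves \<open>canalyzed_value d a k = b k\<close> (\<open>1 \<le> k \<le> n\<close>) for \<open>d\<close> with \<open>d n = 1\<close>, downwards from \<open>k = n\<close>.\<close>

function ncf_heads :: "nat \<Rightarrow> (nat \<Rightarrow> bit) \<Rightarrow> (nat \<Rightarrow> bit) \<Rightarrow> nat \<Rightarrow> bit" where
  "ncf_heads n a b k =
     (if n \<le> k then 1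
      else b (k + 1) + (if k = 0 then 0 else b k) + ncf_heads n a b (k + 1) * a (k + 1))"
  by auto
termination by (relation "measure (\<lambda>(n, a, b, k). n - k)") auto

declare ncf_heads.simps [simp del]

lemma ncf_heads_top: "n \<le> k \<Longrightarrow> ncf_heads n a b k = 1"
  by (simp add: ncf_heads.simps)

lemma ncf_heads_step:
  "k < n \<Longrightarrow> ncf_heads n a b k =
     b (k + 1) + (if k = 0 then 0 else b k) + ncf_heads n a b (k + 1) * a (k + 1)"
  by (subst ncf_heads.simps) simp

lemma canalyzed_value_ncf_heads:
  assumes "k \<in> {1..n}"
  shows "canalyzed_value (ncf_heads n a b) a k = b k"
  using assms
proof (induction k)
  case (Suc k)
  let ?d = "ncf_heads n a b"
  show ?case
  proof (cases k)
    case 0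
    then show ?thesis using ncf_heads_step[of 0 n a b] Suc.prems by (simp add: canalyzed_value_def add.assoc)
  next
    case (Suc k')
    have IH: "canalyzed_value ?d a k = b k" using Suc.IH Suc.prems Suc by simp
    have step: "?d k = b (k + 1) + b k + ?d (k + 1) * a (k + 1)"
      using ncf_heads_step[of k n a b] Suc.prems Suc by simp
    have "{1..<Suc k} = insert k {1..<k}" using Suc by auto
    then have "canalyzed_value ?d a (Suc k) = canalyzed_value ?d a k + ?d k + ?d (Suc k) * a (Suc k)"
      by (simp add: canalyzed_value_def algebra_simps)
    also have "\<dots> = b (Suc k)" using IH step by (simp add: add_ac)
    finally show ?thesis .
  qed
qed simp

lemma bool_fun_coeffs_unique:
  assumes c: "\<forall>S. S \<notin> Pow {1..n} \<longrightarrow> c S = 0" and c': "\<forall>S. S \<notin> Pow {1..n} \<longrightarrow> c' S = 0"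
    and eq: "\<And>x. bool_fun n c x = bool_fun n c' x"
  shows "c = c'"
proof -
  have "\<forall>S\<in>Pow {1..n}. c S - c' S = 0"
  proof (rule multilinear_coeffs_eq_0)
    fix x :: "nat \<Rightarrow> bit"
    show "(\<Sum>S\<in>Pow {1..n}. (c S - c' S) * (\<Prod>l\<in>S. x l)) = 0"
      using eq[of x] by (simp add: bool_fun_def left_diff_distrib sum_subtractf)
  qed simp
  then show ?thesis
  proof (intro ext)
    fix S
    show "c S = c' S" using \<open>\<forall>S\<in>Pow {1..n}. c S - c' S = 0\<close> c c' by (cases "S \<in> Pow {1..n}") auto
  qed
qed

theorem ex_ncf_relations_iff_nested_canalyzing:
  assumes n: "n \<ge> 1" and supp: "\<forall>S. S \<notin> Pow {1..n} \<longrightarrow> c S = 0"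
  shows "(\<exists>\<sigma>. \<sigma> permutes {1..n} \<and> ncf_relations \<sigma> n c) \<longleftrightarrow> nested_canalyzing n (bool_fun n c)"
proof
  assume "\<exists>\<sigma>. \<sigma> permutes {1..n} \<and> ncf_relations \<sigma> n c"
  then obtain \<sigma> where p: "\<sigma> permutes {1..n}" and rel: "ncf_relations \<sigma> n c" by blast
  define d where "d r = c (\<sigma> ` {1..r})" for r
  define a where "a k = c ({1..n} - {\<sigma> k})" for k
  have c: "c = ncf_coeffs \<sigma> n d a"
    unfolding d_def a_def by (rule ncf_relations_imp_eq_ncf_coeffs[OF p n supp rel])
  have "d n = 1" using rel permutes_image[OF p] by (simp add: d_def ncf_relations_def)
  then have "nested_canalyzing_wrt n \<sigma> a (canalyzed_value d a) (bool_fun n c)"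
    unfolding c by (rule nested_canalyzing_wrt_ncf_coeffs[of \<sigma> n d, OF p n])
  then show "nested_canalyzing n (bool_fun n c)"
    using p nested_canalyzing_wrt_depends_on_all[OF p n] unfolding nested_canalyzing_iff by blast
next
  assume "nested_canalyzing n (bool_fun n c)"
  then obtain \<sigma> a b where p: "\<sigma> permutes {1..n}" and h: "nested_canalyzing_wrt n \<sigma> a b (bool_fun n c)"
    unfolding nested_canalyzing_iff by blast
  define d where "d = ncf_heads n a b"
  have dn: "d n = 1" by (simp add: d_def ncf_heads_top)
  have "nested_canalyzing_wrt n \<sigma> a (canalyzed_value d a) (bool_fun n (ncf_coeffs \<sigma> n d a))"
    by (rule nested_canalyzing_wrt_ncf_coeffs[of \<sigma> n d, OF p n dn])
  moreover have "\<forall>k\<in>{1..n}. canalyzed_value d a k = b k"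
    by (simp add: d_def canalyzed_value_ncf_heads)
  ultimately have "nested_canalyzing_wrt n \<sigma> a b (bool_fun n (ncf_coeffs \<sigma> n d a))"
    using nested_canalyzing_wrt_cong[OF _ n] by blast
  then have "c = ncf_coeffs \<sigma> n d a"
    using bool_fun_coeffs_unique[OF supp] nested_canalyzing_wrt_unique[OF h] by (simp add: ncf_coeffs_def)
  then show "\<exists>\<sigma>. \<sigma> permutes {1..n} \<and> ncf_relations \<sigma> n c"
    using p ncf_relations_ncf_coeffs[of \<sigma> n d, OF p n dn] by blast
qed

section \<open>The ideal of all nested canalyzing functions\<close>

lemma is_ring_hom_vanishes_on_ideal_span:
  assumes f: "is_ring_hom f" and G: "\<forall>g\<in>G. f g = 0" and P: "P \<in> ideal_span R G"
  shows "f P = 0"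
proof -
  obtain F q where P: "P = (\<Sum>g\<in>F. q g * g)" and FG: "F \<subseteq> G"
    using P unfolding ideal_span_def by blast
  show ?thesis
    unfolding P is_ring_hom_sum[OF f] is_ring_hom_mult[OF f] using FG G by (intro sum.neutral) auto
qed

lemma mult_mem_ideal_span: "g \<in> G \<Longrightarrow> q \<in> R \<Longrightarrow> q * g \<in> ideal_span R G"
  unfolding ideal_span_def by (intro CollectI exI[of _ "{g}"] exI[of _ "\<lambda>_. q"]) auto

definition I_sigma_gens :: "nat \<Rightarrow> (nat \<Rightarrow> nat) \<Rightarrow> (nat set, F2bar) mpoly set" where
  "I_sigma_gens n \<sigma> = {Var {1..n} - 1} \<union>
     {Var S - Var (completion \<sigma> n S) *
        (\<Prod>k\<in>{k \<in> {1..r_idx \<sigma> n S}. \<sigma> k \<notin> S}. Var ({1..n} - {\<sigma> k})) | S. S \<subset> {1..n}}"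

lemma I_sigma_eq_ideal_span: "I_sigma n \<sigma> = ideal_span (PolyRing n) (I_sigma_gens n \<sigma>)"
  by (simp add: I_sigma_def I_sigma_gens_def)

lemma I_sigma_gens_subset_PolyRing:
  assumes p: "\<sigma> permutes {1..n}"
  shows "I_sigma_gens n \<sigma> \<subseteq> PolyRing n"
proof
  fix g assume "g \<in> I_sigma_gens n \<sigma>"
  then consider (top) "g = Var {1..n} - 1"
    | (rel) S where "S \<subset> {1..n}" "g = Var S - Var (completion \<sigma> n S) *
        (\<Prod>k\<in>{k \<in> {1..r_idx \<sigma> n S}. \<sigma> k \<notin> S}. Var ({1..n} - {\<sigma> k}))"
    unfolding I_sigma_gens_def by blast
  then show "g \<in> PolyRing n"
  proof cases
    case top
    have "mpoly_vars (Var {1..n} - 1 :: (nat set, F2bar) mpoly) \<subseteq> Pow {1..n}"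
      by (intro mpoly_vars_subsetI) simp_all
    then show ?thesis unfolding top PolyRing_def by simp
  next
    case rel
    have "completion \<sigma> n S \<subseteq> {1..n}"
    proof (cases "S = {}")
      case False
      then have "r_idx \<sigma> n S \<in> {1..n}" using r_idx_mem(1)[OF p _ False] rel(1) by auto
      then have "\<sigma> ` {1..r_idx \<sigma> n S} \<subseteq> \<sigma> ` {1..n}" by auto
      then show ?thesis unfolding completion_def permutes_image[OF p] .
    qed (simp add: completion_def)
    moreover have "S \<subseteq> {1..n}" using rel(1) by blast
    ultimately show ?thesis unfolding rel(2) PolyRing_def by (intro CollectI mpoly_vars_subsetI) simp_all
  qed
qed

lemma I_sigma_gens_vanish_iff:
  "(\<forall>g\<in>I_sigma_gens n \<sigma>. mpoly_eval g (emb \<circ> c) = 0) \<longleftrightarrow> ncf_relations \<sigma> n c"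
proof -
  let ?ev = "\<lambda>P. mpoly_eval P (emb \<circ> c)"
  note ev = is_ring_hom_simps[OF is_ring_hom_mpoly_eval]
  have top: "?ev (Var {1..n} - 1) = 0 \<longleftrightarrow> c {1..n} = 1"
    using to_ac_eq_iff[of "c {1..n}" 1] by (simp add: ev emb_eq_to_ac)
  have rel: "?ev (Var S - Var C * (\<Prod>k\<in>K. Var (Y k))) = 0 \<longleftrightarrow> c S = c C * (\<Prod>k\<in>K. c (Y k))"
    for S C K Y
  proof -
    have eq: "?ev (Var S - Var C * (\<Prod>k\<in>K. Var (Y k))) = to_ac (c S - c C * (\<Prod>k\<in>K. c (Y k)))"
      by (simp add: ev emb_eq_to_ac to_ac_prod)
    show ?thesis by (simp only: eq to_ac_eq_0_iff right_minus_eq)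
  qed
  have "(\<forall>g\<in>I_sigma_gens n \<sigma>. ?ev g = 0) \<longleftrightarrow> ?ev (Var {1..n} - 1) = 0 \<and>
     (\<forall>S. S \<subset> {1..n} \<longrightarrow> ?ev (Var S - Var (completion \<sigma> n S) *
          (\<Prod>k\<in>{k \<in> {1..r_idx \<sigma> n S}. \<sigma> k \<notin> S}. Var ({1..n} - {\<sigma> k}))) = 0)"
    unfolding I_sigma_gens_def by blast
  also have "\<dots> \<longleftrightarrow> ncf_relations \<sigma> n c"
    unfolding top rel ncf_relations_def ..
  finally show ?thesis .
qed

theorem vanishes_on_I_Vncf_iff:
  "(\<forall>P\<in>I_Vncf n. mpoly_eval P (emb \<circ> c) = 0) \<longleftrightarrow> (\<exists>\<sigma>. \<sigma> permutes {1..n} \<and> ncf_relations \<sigma> n c)"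
proof
  let ?ev = "\<lambda>P. mpoly_eval P (emb \<circ> c)"
  let ?Ps = "{\<sigma>. \<sigma> permutes {1..n}}"
  assume V: "\<forall>P\<in>I_Vncf n. ?ev P = 0"
  show "\<exists>\<sigma>. \<sigma> permutes {1..n} \<and> ncf_relations \<sigma> n c"
  proof (rule ccontr)
    assume "\<nexists>\<sigma>. \<sigma> permutes {1..n} \<and> ncf_relations \<sigma> n c"
    then have "\<forall>\<sigma>\<in>?Ps. \<exists>g\<in>I_sigma_gens n \<sigma>. ?ev g \<noteq> 0" using I_sigma_gens_vanish_iff by blast
    then obtain G where G: "\<And>\<sigma>. \<sigma> \<in> ?Ps \<Longrightarrow> G \<sigma> \<in> I_sigma_gens n \<sigma> \<and> ?ev (G \<sigma>) \<noteq> 0" by metis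
    have fin: "finite ?Ps" by (simp add: finite_permutations)
    \<comment> \<open>the zero set of a finite intersection of ideals is the union of their zero sets\<close>
    have "(\<Prod>\<sigma>\<in>?Ps. G \<sigma>) \<in> I_Vncf n"
      unfolding I_Vncf_def
    proof
      fix \<tau> assume \<tau>: "\<tau> \<in> ?Ps"
      have "(\<Prod>\<sigma>\<in>?Ps - {\<tau>}. G \<sigma>) \<in> PolyRing n"
        using G I_sigma_gens_subset_PolyRing unfolding PolyRing_def
        by (intro CollectI mpoly_vars_subsetI) blast
      then have "(\<Prod>\<sigma>\<in>?Ps - {\<tau>}. G \<sigma>) * G \<tau> \<in> I_sigma n \<tau>"
        unfolding I_sigma_eq_ideal_span using G[OF \<tau>] by (intro mult_mem_ideal_span) auto
      then show "(\<Prod>\<sigma>\<in>?Ps. G \<sigma>) \<in> I_sigma n \<tau>"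
        using prod.remove[OF fin \<tau>, of G] by (simp add: mult.commute)
    qed
    then have "?ev (\<Prod>\<sigma>\<in>?Ps. G \<sigma>) = 0" using V by blast
    moreover have "?ev (\<Prod>\<sigma>\<in>?Ps. G \<sigma>) \<noteq> 0"
      using G fin by (simp add: is_ring_hom_prod[OF is_ring_hom_mpoly_eval] prod_zero_iff)
    ultimately show False by contradiction
  qed
next
  assume "\<exists>\<sigma>. \<sigma> permutes {1..n} \<and> ncf_relations \<sigma> n c"
  then obtain \<sigma> where p: "\<sigma> permutes {1..n}" and rel: "ncf_relations \<sigma> n c" by blast
  show "\<forall>P\<in>I_Vncf n. mpoly_eval P (emb \<circ> c) = 0"
  proof
    fix P assume "P \<in> I_Vncf n"
    then have "P \<in> ideal_span (PolyRing n) (I_sigma_gens n \<sigma>)"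
      using p unfolding I_Vncf_def I_sigma_eq_ideal_span by blast
    then show "mpoly_eval P (emb \<circ> c) = 0"
      by (rule is_ring_hom_vanishes_on_ideal_span[OF is_ring_hom_mpoly_eval, rotated])
        (use rel I_sigma_gens_vanish_iff[of n \<sigma> c] in simp)
  qed
qed

section \<open>Data fitting and the kernel of \<open>\<Phi>\<close>\<close>

definition delta_val :: "nat \<Rightarrow> (nat \<Rightarrow> bit) \<Rightarrow> (nat \<Rightarrow> bit) \<Rightarrow> bit" where
  "delta_val n y x = (\<Prod>e\<in>{1..n}. 1 - (x e - y e))"

definition f_data_val ::
    "nat \<Rightarrow> nat \<Rightarrow> (nat \<Rightarrow> nat \<Rightarrow> bit) \<Rightarrow> (nat \<Rightarrow> nat \<Rightarrow> bit) \<Rightarrow> nat \<Rightarrow> (nat \<Rightarrow> bit) \<Rightarrow> bit" where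
  "f_data_val n r s t i x = (\<Sum>j\<in>{1..r}. t j i * delta_val n (s j) x)"

definition p_data_val :: "nat \<Rightarrow> nat \<Rightarrow> (nat \<Rightarrow> nat \<Rightarrow> bit) \<Rightarrow> (nat \<Rightarrow> bit) \<Rightarrow> bit" where
  "p_data_val n r s x = (\<Prod>j\<in>{1..r}. 1 - delta_val n (s j) x)"

lemma delta_val_eq: "delta_val n y x = (if \<forall>e\<in>{1..n}. x e = y e then 1 else 0)"
proof (cases "\<forall>e\<in>{1..n}. x e = y e")
  case True
  then show ?thesis by (auto simp: delta_val_def intro!: prod.neutral)
next
  case False
  then obtain e where e: "e \<in> {1..n}" "x e \<noteq> y e" by auto
  then have "1 - (x e - y e) = 0"
    using bit_cases[of "x e"] bit_cases[of "y e"] by (auto simp: minus_bit_def)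
  then show ?thesis using False e by (auto simp: delta_val_def intro!: prod_zero bexI[of _ e])
qed

lemma data_vals_at_data_point:
  assumes D: "\<forall>j\<in>{1..r}. \<forall>k\<in>{1..r}. j \<noteq> k \<longrightarrow> (\<exists>e\<in>{1..n}. s j e \<noteq> s k e)"
    and j: "j \<in> {1..r}" and x: "\<forall>e\<in>{1..n}. x e = s j e"
  shows "f_data_val n r s t i x = t j i" "p_data_val n r s x = 0"
proof -
  have delta: "delta_val n (s k) x = (if k = j then 1 else 0)" if k: "k \<in> {1..r}" for k
  proof (cases "k = j")
    case False
    then obtain e where "e \<in> {1..n}" "s j e \<noteq> s k e" using D j k by metis
    then show ?thesis using x False by (auto simp: delta_val_eq)
  qed (use x in \<open>simp add: delta_val_eq\<close>)
  have "f_data_val n r s t i x = (\<Sum>k\<in>{1..r}. if k = j then t k i else 0)"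
    unfolding f_data_val_def by (rule sum.cong[OF refl]) (simp add: delta)
  also have "\<dots> = t j i" using j by simp
  finally show "f_data_val n r s t i x = t j i" .
  show "p_data_val n r s x = 0"
    unfolding p_data_val_def using j delta[OF j] by (intro prod_zero) (auto intro!: bexI[of _ j])
qed

lemma data_vals_off_data:
  assumes "\<forall>j\<in>{1..r}. \<exists>e\<in>{1..n}. x e \<noteq> s j e"
  shows "f_data_val n r s t i x = 0" "p_data_val n r s x = 1"
proof -
  have delta: "delta_val n (s k) x = 0" if "k \<in> {1..r}" for k
    using assms that by (auto simp: delta_val_eq)
  show "f_data_val n r s t i x = 0" unfolding f_data_val_def using delta by (intro sum.neutral) auto
  show "p_data_val n r s x = 1" unfolding p_data_val_def using delta by (intro prod.neutral) auto
qed

lemma bool_fun_cong: "\<forall>e\<in>{1..n}. x e = y e \<Longrightarrow> bool_fun n c x = bool_fun n c y"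
  unfolding bool_fun_def by (intro sum.cong arg_cong2[where f = "(*)"] prod.cong refl) auto

lemma fitting_bool_fun_eq:
  assumes D: "\<forall>j\<in>{1..r}. \<forall>k\<in>{1..r}. j \<noteq> k \<longrightarrow> (\<exists>e\<in>{1..n}. s j e \<noteq> s k e)"
    and fit: "\<forall>j\<in>{1..r}. bool_fun n c (s j) = t j i"
  shows "f_data_val n r s t i x + bool_fun n c x * p_data_val n r s x = bool_fun n c x"
proof (cases "\<exists>j\<in>{1..r}. \<forall>e\<in>{1..n}. x e = s j e")
  case True
  then obtain j where j: "j \<in> {1..r}" "\<forall>e\<in>{1..n}. x e = s j e" by blast
  then have "bool_fun n c x = t j i" using bool_fun_cong[OF j(2)] fit by simp
  then show ?thesis using data_vals_at_data_point[OF D j] by simp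
next
  case False
  then show ?thesis using data_vals_off_data[of r n x s] by auto
qed

context
  fixes psi :: "(nat set, F2bar) mpoly \<Rightarrow> 'r::comm_ring_1" and rho :: "bit \<Rightarrow> 'r"
  assumes psi: "is_ring_hom psi" and rho: "is_ring_hom rho"
    and psi_Const: "\<And>b. psi (Const (emb b)) = rho b"
begin

lemma mpoly_hom_XC: "mpoly_hom psi a (XC b) = rho b"
  unfolding XC_def by (simp add: mpoly_hom_Const[OF psi] psi_Const)

lemma mpoly_hom_delta: "mpoly_hom psi (rho \<circ> x) (delta n y) = rho (delta_val n y x)"
  unfolding delta_def delta_val_def
  by (simp add: is_ring_hom_simps[OF is_ring_hom_mpoly_hom[OF psi]] is_ring_hom_simps[OF rho]
      mpoly_hom_Var[OF psi] mpoly_hom_XC)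

lemma mpoly_hom_f_data: "mpoly_hom psi (rho \<circ> x) (f_data n r s t i) = rho (f_data_val n r s t i x)"
  unfolding f_data_def f_data_val_def
  by (simp add: is_ring_hom_simps[OF is_ring_hom_mpoly_hom[OF psi]] is_ring_hom_simps[OF rho]
      mpoly_hom_XC mpoly_hom_delta)

lemma mpoly_hom_p_data: "mpoly_hom psi (rho \<circ> x) (p_data n r s) = rho (p_data_val n r s x)"
  unfolding p_data_def p_data_val_def
  by (simp add: is_ring_hom_simps[OF is_ring_hom_mpoly_hom[OF psi]] is_ring_hom_simps[OF rho]
      mpoly_hom_delta)

lemma mpoly_hom_B_poly:
  "mpoly_hom psi (rho \<circ> x) (B_poly n) = (\<Sum>H\<in>Pow {1..n}. psi (Var H) * rho (\<Prod>l\<in>H. x l))"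
  unfolding B_poly_def
  by (simp add: is_ring_hom_simps[OF is_ring_hom_mpoly_hom[OF psi]] is_ring_hom_prod[OF rho]
      mpoly_hom_Const[OF psi] mpoly_hom_Var[OF psi])

end

lemma mpoly_vars_data_poly: "mpoly_vars (f_data n r s t i + B_poly n * p_data n r s) \<subseteq> {1..n}"
  unfolding f_data_def B_poly_def p_data_def delta_def XC_def
  by (intro mpoly_vars_subsetI) auto

lemma mpoly_hom_data_poly_boolean:
  assumes "is_ring_hom psi" and "\<And>v. a v * a v = a v"
  shows "mpoly_hom psi a (f_data n r s t i + B_poly n * p_data n r s)
       = (\<Sum>S\<in>Pow {1..n}. psi (W n r s t i S) * (\<Prod>l\<in>S. a l))"
  using mpoly_hom_idem_eq_reduced[OF assms finite_atLeastAtMost mpoly_vars_data_poly]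
  by (simp add: W_def reduced_coeff_def Let_def)

lemma W_eq_0: "S \<notin> Pow {1..n} \<Longrightarrow> W n r s t i S = 0"
  using reduced_coeff_eq_0[OF mpoly_vars_data_poly] by (simp add: W_def reduced_coeff_def Let_def)

definition data_point_form :: "nat \<Rightarrow> (nat \<Rightarrow> bit) \<Rightarrow> bit \<Rightarrow> (nat set, F2bar) mpoly" where
  "data_point_form n x y = (\<Sum>S\<in>Pow {1..n}. Const (emb (\<Prod>l\<in>S. x l)) * Var S) - Const (emb y)"

lemma mpoly_eval_data_point_form:
  "mpoly_eval (data_point_form n x y) (emb \<circ> c) = emb (bool_fun n c x - y)"
  unfolding data_point_form_def bool_fun_def
  by (simp add: is_ring_hom_simps[OF is_ring_hom_mpoly_eval] is_ring_hom_simps[OF is_ring_hom_emb]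
      mult.commute)

lemma data_point_form_in_ker_Phi:
  assumes D: "\<forall>j\<in>{1..r}. \<forall>k\<in>{1..r}. j \<noteq> k \<longrightarrow> (\<exists>e\<in>{1..n}. s j e \<noteq> s k e)"
    and j: "j \<in> {1..r}"
  shows "data_point_form n (s j) (t j i) \<in> ker_Phi n r s t i"
proof -
  define rho :: "bit \<Rightarrow> (nat set, F2bar) mpoly" where "rho = Const \<circ> emb"
  have rho: "is_ring_hom rho"
    unfolding rho_def by (rule is_ring_hom_comp[OF is_ring_hom_Const is_ring_hom_emb])
  have id_Const: "id (Const (emb b)) = rho b" for b by (simp add: rho_def)
  have idem: "(rho \<circ> s j) v * (rho \<circ> s j) v = (rho \<circ> s j) v" for v
    using is_ring_hom_mult[OF rho, of "s j v" "s j v"] bit_cases[of "s j v"] by auto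
  have prod_rho: "(\<Prod>l\<in>S. (rho \<circ> s j) l) = Const (emb (\<Prod>l\<in>S. s j l))" for S
    using is_ring_hom_prod[OF rho, of "s j" S] by (simp add: rho_def)
  have at_point: "\<forall>e\<in>{1..n}. s j e = s j e" by simp
  have "(\<Sum>S\<in>Pow {1..n}. Const (emb (\<Prod>l\<in>S. s j l)) * W n r s t i S)
      = (\<Sum>S\<in>Pow {1..n}. W n r s t i S * (\<Prod>l\<in>S. (rho \<circ> s j) l))"
    by (simp only: prod_rho mult.commute)
  also have "\<dots> = mpoly_hom id (rho \<circ> s j) (f_data n r s t i + B_poly n * p_data n r s)"
    using mpoly_hom_data_poly_boolean[where a = "rho \<circ> s j", OF is_ring_hom_id idem] by simp
  also have "\<dots> = rho (f_data_val n r s t i (s j))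
      + mpoly_hom id (rho \<circ> s j) (B_poly n) * rho (p_data_val n r s (s j))"
    by (simp add: is_ring_hom_simps[OF is_ring_hom_mpoly_hom[OF is_ring_hom_id]]
        mpoly_hom_f_data[OF is_ring_hom_id rho id_Const] mpoly_hom_p_data[OF is_ring_hom_id rho id_Const])
  also have "\<dots> = rho (t j i)"
    using data_vals_at_data_point[OF D j at_point] by (simp add: is_ring_hom_0[OF rho])
  also have "\<dots> = Const (emb (t j i))" by (simp add: rho_def)
  finally have W_sum: "(\<Sum>S\<in>Pow {1..n}. Const (emb (\<Prod>l\<in>S. s j l)) * W n r s t i S) = Const (emb (t j i))" .
  have "Phi n r s t i (data_point_form n (s j) (t j i)) = 0"
    using W_sum unfolding Phi_def data_point_form_def
    by (simp add: is_ring_hom_simps[OF is_ring_hom_mpoly_hom[OF is_ring_hom_Const]]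
        mpoly_hom_Const[OF is_ring_hom_Const] mpoly_hom_Var[OF is_ring_hom_Const])
  moreover have "data_point_form n (s j) (t j i) \<in> PolyRing n"
    unfolding PolyRing_def data_point_form_def by (intro CollectI mpoly_vars_subsetI) simp_all
  ultimately show ?thesis by (simp add: ker_Phi_def)
qed

lemma mpoly_hom_data_poly_at_bool_point:
  "mpoly_hom (\<lambda>Q. mpoly_eval Q (emb \<circ> c)) (emb \<circ> x) (f_data n r s t i + B_poly n * p_data n r s)
     = emb (f_data_val n r s t i x + bool_fun n c x * p_data_val n r s x)"
proof -
  have ev: "is_ring_hom (\<lambda>Q. mpoly_eval Q (emb \<circ> c))" by (rule is_ring_hom_mpoly_eval)
  have ev_Const: "mpoly_eval (Const (emb b)) (emb \<circ> c) = emb b" for b by simp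
  show ?thesis
    by (simp add: is_ring_hom_simps[OF is_ring_hom_mpoly_hom[OF ev]] is_ring_hom_simps[OF is_ring_hom_emb]
        mpoly_hom_f_data[OF ev is_ring_hom_emb ev_Const] mpoly_hom_p_data[OF ev is_ring_hom_emb ev_Const]
        mpoly_hom_B_poly[OF ev is_ring_hom_emb ev_Const] bool_fun_def)
qed

lemma mpoly_eval_W_of_fitting:
  assumes D: "\<forall>j\<in>{1..r}. \<forall>k\<in>{1..r}. j \<noteq> k \<longrightarrow> (\<exists>e\<in>{1..n}. s j e \<noteq> s k e)"
    and supp: "\<forall>S. S \<notin> Pow {1..n} \<longrightarrow> c S = 0"
    and fit: "\<forall>j\<in>{1..r}. bool_fun n c (s j) = t j i"
  shows "mpoly_eval (W n r s t i S) (emb \<circ> c) = emb (c S)"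
proof (cases "S \<in> Pow {1..n}")
  case False
  then show ?thesis using supp W_eq_0[OF False] by (simp add: emb_def)
next
  case True
  let ?ev = "\<lambda>Q. mpoly_eval Q (emb \<circ> c)"
  have ev: "is_ring_hom ?ev" by (rule is_ring_hom_mpoly_eval)
  \<comment> \<open>at Boolean points both sides expand \<open>h = f_i + h p\<close>, so their multilinear coefficients agree\<close>
  have "\<forall>S\<in>Pow {1..n}. ?ev (W n r s t i S) - emb (c S) = 0"
  proof (rule multilinear_coeffs_eq_0)
    fix y :: "nat \<Rightarrow> F2bar" assume y01: "\<forall>l. y l = 0 \<or> y l = 1"
    define x :: "nat \<Rightarrow> bit" where "x l = (if y l = 0 then 0 else 1)" for l
    have y: "y = emb \<circ> x" using y01 by (auto simp: x_def emb_def fun_eq_iff)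
    have idem: "(emb \<circ> x) v * (emb \<circ> x) v = (emb \<circ> x) v" for v
      using y01 unfolding y[symmetric] by (metis mult_1 mult_zero_left)
    have "(\<Sum>S\<in>Pow {1..n}. ?ev (W n r s t i S) * (\<Prod>l\<in>S. y l))
        = mpoly_hom ?ev (emb \<circ> x) (f_data n r s t i + B_poly n * p_data n r s)"
      using mpoly_hom_data_poly_boolean[where a = "emb \<circ> x", OF ev idem] y by simp
    also have "\<dots> = emb (f_data_val n r s t i x + bool_fun n c x * p_data_val n r s x)"
      by (rule mpoly_hom_data_poly_at_bool_point)
    also have "\<dots> = emb (bool_fun n c x)" using fitting_bool_fun_eq[where t = t and i = i, OF D fit] by simp
    also have "\<dots> = (\<Sum>S\<in>Pow {1..n}. emb (c S) * (\<Prod>l\<in>S. y l))"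
      by (simp add: y bool_fun_def is_ring_hom_simps[OF is_ring_hom_emb])
    finally show "(\<Sum>S\<in>Pow {1..n}. (?ev (W n r s t i S) - emb (c S)) * (\<Prod>l\<in>S. y l)) = 0"
      by (simp add: left_diff_distrib sum_subtractf)
  qed simp
  then show ?thesis using True by simp
qed

lemma mpoly_eval_Phi:
  "mpoly_eval (Phi n r s t i P) b = mpoly_eval P (\<lambda>S. mpoly_eval (W n r s t i S) b)"
proof -
  have "mpoly_eval (Phi n r s t i P) b
      = mpoly_hom ((\<lambda>Q. mpoly_eval Q b) \<circ> Const) ((\<lambda>Q. mpoly_eval Q b) \<circ> W n r s t i) P"
    unfolding Phi_def by (rule mpoly_hom_compose[OF is_ring_hom_mpoly_eval])
  also have "(\<lambda>Q. mpoly_eval Q b) \<circ> Const = id" by (simp add: fun_eq_iff)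
  finally show ?thesis by (simp add: mpoly_eval_def comp_def id_def)
qed

theorem vanishes_on_ker_Phi_iff_fits:
  assumes D: "\<forall>j\<in>{1..r}. \<forall>k\<in>{1..r}. j \<noteq> k \<longrightarrow> (\<exists>e\<in>{1..n}. s j e \<noteq> s k e)"
    and supp: "\<forall>S. S \<notin> Pow {1..n} \<longrightarrow> c S = 0"
  shows "(\<forall>P\<in>ker_Phi n r s t i. mpoly_eval P (emb \<circ> c) = 0) \<longleftrightarrow> (\<forall>j\<in>{1..r}. bool_fun n c (s j) = t j i)"
proof
  assume V: "\<forall>P\<in>ker_Phi n r s t i. mpoly_eval P (emb \<circ> c) = 0"
  show "\<forall>j\<in>{1..r}. bool_fun n c (s j) = t j i"
  proof
    fix j assume j: "j \<in> {1..r}"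
    have "emb (bool_fun n c (s j) - t j i) = 0"
      using V data_point_form_in_ker_Phi[OF D j] mpoly_eval_data_point_form by metis
    then show "bool_fun n c (s j) = t j i" by (simp add: emb_eq_to_ac)
  qed
next
  assume fit: "\<forall>j\<in>{1..r}. bool_fun n c (s j) = t j i"
  show "\<forall>P\<in>ker_Phi n r s t i. mpoly_eval P (emb \<circ> c) = 0"
  proof
    fix P assume "P \<in> ker_Phi n r s t i"
    then have "0 = mpoly_eval (Phi n r s t i P) (emb \<circ> c)" by (simp add: ker_Phi_def)
    also have "\<dots> = mpoly_eval P (emb \<circ> c)"
      using mpoly_eval_W_of_fitting[where t = t and i = i, OF D supp fit]
      by (simp add: mpoly_eval_Phi comp_def)
    finally show "mpoly_eval P (emb \<circ> c) = 0" by simp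
  qed
qed

lemma vanishes_on_ideal_plus_iff:
  assumes "0 \<in> I" and "0 \<in> J" and f: "is_ring_hom f"
  shows "(\<forall>P\<in>ideal_plus I J. f P = 0) \<longleftrightarrow> (\<forall>P\<in>I. f P = 0) \<and> (\<forall>P\<in>J. f P = 0)"
proof (intro iffI conjI ballI)
  fix P assume V: "\<forall>P\<in>ideal_plus I J. f P = 0"
  show "f P = 0" if "P \<in> I"
  proof -
    have "P + 0 \<in> ideal_plus I J" using that assms(2) unfolding ideal_plus_def by blast
    with V show ?thesis by simp
  qed
  show "f P = 0" if "P \<in> J"
  proof -
    have "0 + P \<in> ideal_plus I J" using that assms(1) unfolding ideal_plus_def by blast
    with V show ?thesis by simp
  qed
next
  fix P assume "(\<forall>P\<in>I. f P = 0) \<and> (\<forall>P\<in>J. f P = 0)" and "P \<in> ideal_plus I J"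
  then show "f P = 0" unfolding ideal_plus_def by (auto simp: is_ring_hom_add[OF f])
qed

lemma zero_mem_I_Vncf: "0 \<in> I_Vncf n"
  unfolding I_Vncf_def I_sigma_def ideal_span_def by (auto intro!: exI[of _ "{}"])

lemma zero_mem_ker_Phi: "0 \<in> ker_Phi n r s t i"
  unfolding ker_Phi_def PolyRing_def Phi_def by (simp add: mpoly_hom_0 mpoly_vars_def)

theorem mainTheorem2:
  fixes n r i :: nat
    and s t :: "nat \<Rightarrow> nat \<Rightarrow> bit"
  assumes "n \<ge> 1" and "r \<ge> 1" and "i \<in> {1..n}"
    and "\<forall>j\<in>{1..r}. \<forall>k\<in>{1..r}. j \<noteq> k \<longrightarrow> (\<exists>e\<in>{1..n}. s j e \<noteq> s k e)"
  shows "{c :: nat set \<Rightarrow> bit. (\<forall>S. S \<notin> Pow {1..n} \<longrightarrow> c S = 0) \<and>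
            (\<forall>P\<in>ideal_plus (I_Vncf n) (ker_Phi n r s t i). mpoly_eval P (emb \<circ> c) = 0)}
       = {c :: nat set \<Rightarrow> bit. (\<forall>S. S \<notin> Pow {1..n} \<longrightarrow> c S = 0) \<and>
            nested_canalyzing n (bool_fun n c) \<and>
            (\<forall>j\<in>{1..r}. bool_fun n c (s j) = t j i)}"
proof (intro Collect_cong conj_cong refl)
  fix c :: "nat set \<Rightarrow> bit"
  assume supp: "\<forall>S. S \<notin> Pow {1..n} \<longrightarrow> c S = 0"
  show "(\<forall>P\<in>ideal_plus (I_Vncf n) (ker_Phi n r s t i). mpoly_eval P (emb \<circ> c) = 0) \<longleftrightarrow>
        nested_canalyzing n (bool_fun n c) \<and> (\<forall>j\<in>{1..r}. bool_fun n c (s j) = t j i)"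
    by (simp only: vanishes_on_ideal_plus_iff[OF zero_mem_I_Vncf zero_mem_ker_Phi is_ring_hom_mpoly_eval]
        vanishes_on_I_Vncf_iff ex_ncf_relations_iff_nested_canalyzing[OF assms(1) supp]
        vanishes_on_ker_Phi_iff_fits[OF assms(4) supp])
qed

end
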